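(* Let $n \ge 3$ and $2 \le k \le n-1$. Let $A$ be a solution of the $k$-out-of-$(n-1)$ puzzle and $B$ a solution of the $(k-1)$-out-of-$(n-1)$ puzzle, both words on the nails $\{1, \dots, n-1\}$. Then the word \[ A + n + B - A - n \] on the nails $\{1,\dots,n\}$ solves the $k$-out-of-$n$ picture-hanging puzzle.
   Context: Words are elements of the free group on the nails, written additively ($+$ group operation, $-$ inverse, $0$ identity); $n$ in the word denotes the generator for nail $n$. For a nail set $V$ and $S \subseteq V$, $w|_S$ is the image of $w$ under the homomorphism killing the generators in $S$. A solution to the $k$-out-of-$m$ picture-hanging puzzle on a set $V$ of $m$ nails is a word $w$ with $w|_S = 0 \iff |S| \ge k$ for all $S \subseteq V$ (equivalently for $k\ge1$: $w \ne 0$, removing any $k$ nails gives $0$, removing fewer leaves it nonzero). *)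

theory Defs
  imports Main
begin

text \<open>Words in the free group on nails (natural numbers): a word is a list of
letters (nail, sign); sign True is the generator, False its inverse.
Group addition is concatenation, negation is formal inversion, and two words
denote the same free-group element iff they are related by the equivalence
closure of cancelling an adjacent pair x, x^-1.\<close>

type_synonym letter = "nat \<times> bool"
type_synonym word = "letter list"

definition gen :: "nat \<Rightarrow> word" where
  "gen n = [(n, True)]"

definition winv :: "word \<Rightarrow> word" where
  "winv w = rev (map (\<lambda>(a, b). (a, \<not> b)) w)"

inductive cancel1 :: "word \<Rightarrow> word \<Rightarrow> bool" where
  "cancel1 (xs @ [(a, b), (a, \<not> b)] @ ys) (xs @ ys)"

definition free_eq :: "word \<Rightarrow> word \<Rightarrow> bool" where
  "free_eq = equivclp cancel1"

definition is_zero :: "word \<Rightarrow> bool" where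
  "is_zero w \<longleftrightarrow> free_eq w []"

text \<open>w|_S : image under the homomorphism killing the generators in S.\<close>
definition remove_nails :: "nat set \<Rightarrow> word \<Rightarrow> word" where
  "remove_nails S w = filter (\<lambda>x. fst x \<notin> S) w"

definition nails_of :: "word \<Rightarrow> nat set" where
  "nails_of w = fst ` set w"

definition puzzle_solution :: "nat \<Rightarrow> nat set \<Rightarrow> word \<Rightarrow> bool" where
  "puzzle_solution k V w \<longleftrightarrow> nails_of w \<subseteq> V \<and>
     (\<forall>S. S \<subseteq> V \<longrightarrow> (is_zero (remove_nails S w) \<longleftrightarrow> card S \<ge> k))"

end

theory Submission
  imports Defs
begin

text \<open>Let W = A + n + B - A - n. Removing a set S of nails that contains n leaves the
conjugate a + b - a of b = B|S by a = A|S, which vanishes iff b does, i.e. iff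
|S| - 1 \<ge> k - 1. If n \<notin> S, W|S = a + n + b - a - n with n occurring in neither a nor b.
When a = 0 this is the conjugate n + b - n, which vanishes iff b does; when a \<noteq> 0,
inspecting free reduction shows that the two letters n and -n survive. Hence W|S = 0 iff
a = 0 and b = 0, i.e. iff |S| \<ge> k and |S| \<ge> k - 1.

Equality in the free group is decided by computing reduced forms with a stack:
letters are pushed from the right, and a letter cancels against an inverse on top.\<close>

definition inv_letter :: "letter \<Rightarrow> letter" where
  "inv_letter x = (fst x, \<not> snd x)"

fun push :: "letter \<Rightarrow> word \<Rightarrow> word" where
  "push x [] = [x]"
| "push x (y # r) = (if y = inv_letter x then r else x # y # r)"

definition reduce :: "word \<Rightarrow> word" where
  "reduce w = foldr push w []"

fun reduced :: "word \<Rightarrow> bool" where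
  "reduced [] = True"
| "reduced [x] = True"
| "reduced (x # y # r) \<longleftrightarrow> y \<noteq> inv_letter x \<and> reduced (y # r)"

lemma inv_letter_inv_letter [simp]: "inv_letter (inv_letter x) = x"
  by (simp add: inv_letter_def)

lemma reduced_Cons_tl: "reduced (y # r) \<Longrightarrow> reduced r"
  by (cases r) auto

lemma reduced_push: "reduced r \<Longrightarrow> reduced (push x r)"
  by (cases r) (auto dest: reduced_Cons_tl)

lemma reduced_foldr_push: "reduced r \<Longrightarrow> reduced (foldr push w r)"
  by (induction w) (auto intro: reduced_push)

lemma reduced_reduce: "reduced (reduce w)"
  by (simp add: reduce_def reduced_foldr_push)

lemma push_push_inv_letter:
  assumes "reduced r"
  shows "push x (push (inv_letter x) r) = r"
proof (cases r)
  case (Cons y r')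
  then show ?thesis
    using assms by (cases "y = x"; cases r') auto
qed simp

lemma reduce_Nil [simp]: "reduce [] = []"
  by (simp add: reduce_def)

lemma reduce_Cons: "reduce (x # w) = push x (reduce w)"
  by (simp add: reduce_def)

lemma reduce_append: "reduce (u @ v) = foldr push u (reduce v)"
  by (simp add: reduce_def)

lemma cancel1_in_context: "cancel1 u v \<Longrightarrow> cancel1 (x @ u @ y) (x @ v @ y)"
proof (induction rule: cancel1.induct)
  case (1 xs a b ys)
  show ?case
    using cancel1.intros[of "x @ xs" a b "ys @ y"] by simp
qed

lemma free_eq_in_context: "free_eq u v \<Longrightarrow> free_eq (x @ u @ y) (x @ v @ y)"
  unfolding free_eq_def
proof (induction rule: equivclp_induct)
  case (step v w)
  then show ?case
    by (meson cancel1_in_context equivclp_into_equivclp)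
qed simp

lemma reduce_cancel1: "cancel1 u v \<Longrightarrow> reduce u = reduce v"
proof (induction rule: cancel1.induct)
  case (1 xs a b ys)
  have "push (a, b) (push (a, \<not> b) (reduce ys)) = reduce ys"
    using push_push_inv_letter[OF reduced_reduce, of "(a, b)" ys]
    by (simp add: inv_letter_def)
  then show ?case
    by (simp add: reduce_append reduce_Cons)
qed

lemma free_eq_push: "free_eq (x # r) (push x r)"
proof (cases r)
  case (Cons y r')
  have "cancel1 (x # inv_letter x # r') r'"
    using cancel1.intros[of "[]" "fst x" "snd x" r'] by (simp add: inv_letter_def)
  then show ?thesis
    using Cons by (auto simp: free_eq_def)
qed (simp add: free_eq_def)

lemma free_eq_reduce: "free_eq w (reduce w)"
proof (induction w)
  case (Cons x w)
  have "free_eq (x # w) (x # reduce w)"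
    using free_eq_in_context[OF Cons, of "[x]" "[]"] by simp
  then show ?case
    using free_eq_push[of x "reduce w"]
    unfolding free_eq_def reduce_Cons by (rule equivclp_trans)
qed (simp add: free_eq_def)

lemma free_eq_iff_reduce_eq: "free_eq u v \<longleftrightarrow> reduce u = reduce v"
proof
  assume "free_eq u v"
  then show "reduce u = reduce v"
    unfolding free_eq_def by (induction rule: equivclp_induct) (auto dest: reduce_cancel1)
next
  assume "reduce u = reduce v"
  then show "free_eq u v"
    using free_eq_reduce[of u] free_eq_reduce[of v]
    unfolding free_eq_def by (metis equivclp_sym equivclp_trans)
qed

lemma is_zero_iff_reduce: "is_zero w \<longleftrightarrow> reduce w = []"
  using free_eq_iff_reduce_eq[of w "[]"] by (simp add: is_zero_def)

lemma reduce_in_context: "reduce u = reduce v \<Longrightarrow> reduce (x @ u @ y) = reduce (x @ v @ y)"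
  using free_eq_in_context free_eq_iff_reduce_eq by blast

lemma winv_Nil [simp]: "winv [] = []"
  by (simp add: winv_def)

lemma winv_Cons: "winv (x # u) = winv u @ [inv_letter x]"
  by (simp add: winv_def inv_letter_def case_prod_beta)

lemma winv_winv [simp]: "winv (winv u) = u"
  by (induction u) (auto simp: winv_def)

lemma winv_gen: "winv (gen n) = [(n, False)]"
  by (simp add: winv_def gen_def)

lemma reduce_append_winv: "reduce (u @ winv u) = []"
proof -
  have "foldr push (u @ winv u) r = r" if "reduced r" for r
    using that
  proof (induction u arbitrary: r)
    case (Cons x u)
    then show ?case
      by (simp add: winv_Cons reduced_push push_push_inv_letter)
  qed (simp add: winv_def)
  then show ?thesis
    by (simp add: reduce_def)
qed

lemma reduce_append_winv_cancel: "reduce (x @ u @ winv u @ y) = reduce (x @ y)"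
  using reduce_in_context[of "u @ winv u" "[]" x y] by (simp add: reduce_append_winv)

lemma reduce_winv_append_cancel: "reduce (x @ winv u @ u @ y) = reduce (x @ y)"
  using reduce_append_winv_cancel[of x "winv u" y] by simp

lemma is_zero_winv: "is_zero u \<Longrightarrow> is_zero (winv u)"
  using reduce_winv_append_cancel[of "[]" u "[]"] reduce_in_context[of u "[]" "winv u" "[]"]
  by (simp add: is_zero_iff_reduce)

lemma is_zero_conj: "is_zero (a @ b @ winv a) \<longleftrightarrow> is_zero b"
proof
  assume "is_zero (a @ b @ winv a)"
  then have "reduce (winv a @ (a @ b @ winv a) @ a) = reduce (winv a @ [] @ a)"
    by (intro reduce_in_context) (simp add: is_zero_iff_reduce)
  moreover have "reduce (winv a @ (a @ b @ winv a) @ a) = reduce b"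
    using reduce_winv_append_cancel[of "[]" a "b @ winv a @ a"]
      reduce_winv_append_cancel[of b a "[]"] by simp
  ultimately show "is_zero b"
    using reduce_winv_append_cancel[of "[]" a "[]"] by (simp add: is_zero_iff_reduce)
next
  assume "is_zero b"
  then have "reduce (a @ b @ winv a) = reduce (a @ [] @ winv a)"
    by (intro reduce_in_context) (simp add: is_zero_iff_reduce)
  then show "is_zero (a @ b @ winv a)"
    by (simp add: is_zero_iff_reduce reduce_append_winv)
qed

lemma nails_of_append: "nails_of (u @ v) = nails_of u \<union> nails_of v"
  by (auto simp: nails_of_def)

lemma nails_of_winv: "nails_of (winv w) = nails_of w"
  by (force simp: nails_of_def winv_def)

lemma nails_of_gen: "nails_of (gen n) = {n}"
  by (simp add: nails_of_def gen_def)

lemma nails_of_reduce: "nails_of (reduce w) \<subseteq> nails_of w"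
proof (induction w)
  case (Cons x w)
  then show ?case
    by (cases "reduce w") (auto simp: reduce_Cons nails_of_def)
qed simp

lemma foldr_push_fresh:
  "fst x \<notin> nails_of w \<Longrightarrow> foldr push w (x # r) = reduce w @ x # r"
proof (induction w)
  case (Cons y w)
  then have "fst y \<noteq> fst x"
    by (simp add: nails_of_def)
  moreover have "push y (s @ x # r) = push y s @ x # r" for s
    using \<open>fst y \<noteq> fst x\<close> by (cases s) (auto simp: inv_letter_def)
  ultimately show ?case
    using Cons by (simp add: nails_of_def reduce_Cons)
qed simp

text \<open>With d the reduced form of c - a, the word reduces to a applied to
n + d - n; if d = 0 this is a, otherwise no cancellation reaches the two n-letters.\<close>
lemma reduce_commutator_fresh_nonzero:
  assumes "n \<notin> nails_of a" and "n \<notin> nails_of c" and "reduce a \<noteq> []"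
  shows "reduce (a @ gen n @ c @ winv a @ winv (gen n)) \<noteq> []"
proof -
  define d where "d = reduce (c @ winv a)"
  have n_d: "n \<notin> nails_of d"
    using nails_of_reduce[of "c @ winv a"] assms by (auto simp: d_def nails_of_append nails_of_winv)
  have "reduce (c @ winv a @ winv (gen n)) = foldr push (c @ winv a) [(n, False)]"
    by (simp add: reduce_def winv_gen)
  also have "\<dots> = d @ [(n, False)]"
    using foldr_push_fresh[of "(n, False)" "c @ winv a" "[]"] assms
    by (simp add: d_def nails_of_append nails_of_winv)
  finally have tail: "reduce (c @ winv a @ winv (gen n)) = d @ [(n, False)]" .
  have "reduce (a @ gen n @ c @ winv a @ winv (gen n))
      = foldr push a (push (n, True) (reduce (c @ winv a @ winv (gen n))))"
    by (simp only: reduce_append gen_def reduce_Cons append_Cons append_Nil)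
  also have "\<dots> = foldr push a (push (n, True) (d @ [(n, False)]))"
    by (simp only: tail)
  also have "\<dots> \<noteq> []"
  proof (cases d)
    case Nil
    then show ?thesis
      using assms by (simp add: inv_letter_def reduce_def)
  next
    case (Cons z d')
    with n_d have "push (n, True) (d @ [(n, False)]) = (n, True) # d @ [(n, False)]"
      by (auto simp: inv_letter_def nails_of_def)
    then show ?thesis
      using foldr_push_fresh[of "(n, True)" a] assms by simp
  qed
  finally show ?thesis .
qed

lemma is_zero_commutator_fresh:
  assumes "n \<notin> nails_of a" and "n \<notin> nails_of c"
  shows "is_zero (a @ gen n @ c @ winv a @ winv (gen n)) \<longleftrightarrow> is_zero a \<and> is_zero c"
proof (cases "is_zero a")
  case True
  then have "reduce (a @ gen n @ c @ winv a @ winv (gen n)) = reduce (gen n @ c @ winv a @ winv (gen n))"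
    using reduce_in_context[of a "[]" "[]"] by (simp add: is_zero_iff_reduce)
  also have "\<dots> = reduce (gen n @ c @ winv (gen n))"
    using True is_zero_winv reduce_in_context[of "winv a" "[]" "gen n @ c" "winv (gen n)"]
    by (simp add: is_zero_iff_reduce)
  finally show ?thesis
    using True is_zero_conj[of "gen n" c] by (simp add: is_zero_iff_reduce)
next
  case False
  then show ?thesis
    using reduce_commutator_fresh_nonzero[OF assms] by (simp add: is_zero_iff_reduce)
qed

lemma remove_nails_append: "remove_nails S (u @ v) = remove_nails S u @ remove_nails S v"
  by (simp add: remove_nails_def)

lemma remove_nails_winv: "remove_nails S (winv u) = winv (remove_nails S u)"
  by (induction u) (auto simp: remove_nails_def winv_def)

lemma remove_nails_gen: "remove_nails S (gen n) = (if n \<in> S then [] else gen n)"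
  by (simp add: remove_nails_def gen_def)

lemma nails_of_remove_nails: "nails_of (remove_nails S w) \<subseteq> nails_of w"
  by (auto simp: remove_nails_def nails_of_def)

lemma puzzle_solution_is_zero_remove_nails:
  assumes "puzzle_solution k V w"
  shows "is_zero (remove_nails S w) \<longleftrightarrow> k \<le> card (S \<inter> V)"
proof -
  have "remove_nails S w = remove_nails (S \<inter> V) w"
    using assms unfolding puzzle_solution_def remove_nails_def nails_of_def
    by (intro filter_cong) auto
  then show ?thesis
    using assms by (simp add: puzzle_solution_def)
qed

lemma puzzle_solution_commutator_extension:
  assumes "finite V" and "n \<notin> V"
    and A: "puzzle_solution k V A" and B: "puzzle_solution (k - 1) V B"
  shows "puzzle_solution k (insert n V) (A @ gen n @ B @ winv A @ winv (gen n))"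
proof -
  let ?W = "A @ gen n @ B @ winv A @ winv (gen n)"
  have nails_A: "nails_of A \<subseteq> V" and nails_B: "nails_of B \<subseteq> V"
    using A B by (simp_all add: puzzle_solution_def)
  then have "nails_of ?W \<subseteq> insert n V"
    by (auto simp: nails_of_append nails_of_winv nails_of_gen)
  moreover have "is_zero (remove_nails S ?W) \<longleftrightarrow> k \<le> card S" if "S \<subseteq> insert n V" for S
  proof -
    define a b where "a = remove_nails S A" and "b = remove_nails S B"
    have "S \<inter> V = S - {n}" and "finite S"
      using that \<open>n \<notin> V\<close> \<open>finite V\<close> finite_subset by auto
    then have zero_a: "is_zero a \<longleftrightarrow> k \<le> card (S - {n})"
      and zero_b: "is_zero b \<longleftrightarrow> k - 1 \<le> card (S - {n})"
      using puzzle_solution_is_zero_remove_nails[OF A, of S]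
        puzzle_solution_is_zero_remove_nails[OF B, of S]
      by (simp_all add: a_def b_def)
    show ?thesis
    proof (cases "n \<in> S")
      case True
      then have "remove_nails S ?W = a @ b @ winv a"
        by (simp add: a_def b_def remove_nails_append remove_nails_winv remove_nails_gen)
      moreover have "card (S - {n}) = card S - 1" and "card S > 0"
        using True \<open>finite S\<close> by (auto simp: card_gt_0_iff)
      ultimately show ?thesis
        using zero_b by (simp add: is_zero_conj) linarith
    next
      case False
      have "n \<notin> nails_of a" "n \<notin> nails_of b"
        using nails_of_remove_nails nails_A nails_B \<open>n \<notin> V\<close> by (fastforce simp: a_def b_def)+
      moreover have "remove_nails S ?W = a @ gen n @ b @ winv a @ winv (gen n)"
        using False by (simp add: a_def b_def remove_nails_append remove_nails_winv remove_nails_gen)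
      ultimately show ?thesis
        using zero_a zero_b False by (auto simp: is_zero_commutator_fresh)
    qed
  qed
  ultimately show ?thesis
    by (auto simp: puzzle_solution_def)
qed

theorem proposition4:
  fixes n k :: nat and A B :: word
  assumes "n \<ge> 3" and "2 \<le> k" and "k \<le> n - 1"
    and "puzzle_solution k {1..n-1} A"
    and "puzzle_solution (k - 1) {1..n-1} B"
  shows "puzzle_solution k {1..n} (A @ gen n @ B @ winv A @ winv (gen n))"
proof -
  have "{1..n} = insert n {1..n-1}" and "n \<notin> {1..n-1}"
    using \<open>n \<ge> 3\<close> by auto
  then show ?thesis
    using puzzle_solution_commutator_extension[OF _ _ assms(4,5)] by simp
qed

end
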